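(* Let $A$ be a bounded linear operator on a complex Hilbert space $\mathcal H \neq \{0\}$. Then \[ W_0(A)\cap \mathcal C_A = \operatorname{cl} W(A)\cap \mathcal C_A = \sigma(A)\cap \mathcal C_A, \] where $\mathcal C_A=\{z\in\mathbb C : |z|=\|A\|\}$.
   Context: The numerical range of $A$ is $W(A)=\{\langle Ax,x\rangle : x\in\mathcal H,\ \|x\|=1\}$, and $\operatorname{cl}W(A)$ denotes its closure in $\mathbb C$. The maximal numerical range $W_0(A)$ is the set of all $\lambda\in\mathbb C$ for which there exist unit vectors $x_n\in\mathcal H$ with $\|Ax_n\|\to\|A\|$ and $\langle Ax_n,x_n\rangle\to\lambda$. $\sigma(A)$ denotes the spectrum of $A$. *)

theory Defs
  imports "HOL-Analysis.Analysis"
begin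

class complex_hilbert = banach +
  fixes scaleC :: "complex \<Rightarrow> 'a \<Rightarrow> 'a"
    and cinner :: "'a \<Rightarrow> 'a \<Rightarrow> complex"
  assumes scaleC_add_right: "scaleC c (x + y) = scaleC c x + scaleC c y"
    and scaleC_add_left: "scaleC (b + c) x = scaleC b x + scaleC c x"
    and scaleC_scaleC: "scaleC b (scaleC c x) = scaleC (b * c) x"
    and scaleC_one: "scaleC 1 x = x"
    and scaleR_scaleC: "scaleR r x = scaleC (complex_of_real r) x"
    and cinner_add_left: "cinner (x + y) z = cinner x z + cinner y z"
    and cinner_scaleC_left: "cinner (scaleC c x) y = c * cinner x y"
    and cinner_commute: "cinner y x = cnj (cinner x y)"
    and norm_cinner: "norm x = sqrt (Re (cinner x x))"

definition bounded_clinear :: "('a::complex_hilbert \<Rightarrow> 'a) \<Rightarrow> bool" where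
  "bounded_clinear T \<longleftrightarrow> bounded_linear T \<and> (\<forall>c x. T (scaleC c x) = scaleC c (T x))"

definition num_range :: "('a::complex_hilbert \<Rightarrow> 'a) \<Rightarrow> complex set" where
  "num_range A = {cinner (A x) x | x. norm x = 1}"

definition max_num_range :: "('a::complex_hilbert \<Rightarrow> 'a) \<Rightarrow> complex set" where
  "max_num_range A = {l. \<exists>xs :: nat \<Rightarrow> 'a. (\<forall>n. norm (xs n) = 1) \<and>
       (\<lambda>n. norm (A (xs n))) \<longlonglongrightarrow> onorm A \<and>
       (\<lambda>n. cinner (A (xs n)) (xs n)) \<longlonglongrightarrow> l}"

definition op_invertible :: "('a::complex_hilbert \<Rightarrow> 'a) \<Rightarrow> bool" where
  "op_invertible T \<longleftrightarrow> (\<exists>B. bounded_clinear B \<and> B \<circ> T = id \<and> T \<circ> B = id)"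

definition op_spectrum :: "('a::complex_hilbert \<Rightarrow> 'a) \<Rightarrow> complex set" where
  "op_spectrum A = {l. \<not> op_invertible (\<lambda>x. A x - scaleC l x)}"

end

theory Submission
  imports Defs
begin

text \<open>
  If \<open>\<langle>Ax\<^sub>n, x\<^sub>n\<rangle> \<rightarrow> \<lambda>\<close> with unit vectors \<open>x\<^sub>n\<close> and \<open>|\<lambda>| = \<parallel>A\<parallel>\<close>, Cauchy--Schwarz squeezes
  \<open>\<parallel>Ax\<^sub>n\<parallel>\<close> between \<open>|\<langle>Ax\<^sub>n, x\<^sub>n\<rangle>|\<close> and \<open>\<parallel>A\<parallel>\<close>, so \<open>\<parallel>Ax\<^sub>n\<parallel> \<rightarrow> \<parallel>A\<parallel>\<close> and \<open>\<lambda> \<in> W\<^sub>0(A)\<close>;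
  expanding \<open>\<parallel>Ax\<^sub>n - \<lambda>x\<^sub>n\<parallel>\<^sup>2\<close> then shows that \<open>\<lambda>\<close> is an approximate eigenvalue, hence in
  \<open>\<sigma>(A)\<close>. Conversely, if \<open>\<lambda> \<notin> cl W(A)\<close> then \<open>A - \<lambda>\<close> is bounded below by the distance
  \<open>e\<close> from \<open>\<lambda>\<close> to \<open>W(A)\<close>. Moving \<open>\<lambda>\<close> radially outwards by \<open>e/4\<close> gives \<open>\<mu>\<close> with
  \<open>|\<mu>| > \<parallel>A\<parallel>\<close>, so \<open>A - \<mu>\<close> is a small perturbation of \<open>-\<mu>\<close> and thus onto; and \<open>A - \<lambda>\<close> is
  in turn a small perturbation of \<open>A - \<mu>\<close>, hence onto and therefore invertible.
\<close>

lemma scaleC_zero_right [simp]: "scaleC c (0::'a::complex_hilbert) = 0"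
  using scaleC_add_right[of c 0 0] by simp

lemma scaleC_minus_right: "scaleC c (- x) = - scaleC c (x::'a::complex_hilbert)"
  using scaleC_add_right[of c x "-x"] by (simp add: eq_neg_iff_add_eq_0 add.commute)

lemma scaleC_diff_right: "scaleC c (x - y) = scaleC c x - scaleC c (y::'a::complex_hilbert)"
  using scaleC_add_right[of c x "-y"] by (simp add: scaleC_minus_right)

lemma scaleC_zero_left [simp]: "scaleC 0 x = (0::'a::complex_hilbert)"
  using scaleC_add_left[of 0 0 x] by simp

lemma scaleC_minus_left: "scaleC (- c) x = - scaleC c (x::'a::complex_hilbert)"
  using scaleC_add_left[of c "-c" x] by (simp add: eq_neg_iff_add_eq_0 add.commute)

lemma scaleC_commute: "scaleC a (scaleC b x) = scaleC b (scaleC a (x::'a::complex_hilbert))"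
  by (simp add: scaleC_scaleC mult.commute)

lemma cinner_minus_left: "cinner (- x) y = - cinner (x::'a::complex_hilbert) y"
  using cinner_add_left[of x "-x" y] cinner_add_left[of 0 0 y]
  by (simp add: eq_neg_iff_add_eq_0)

lemma cinner_diff_left: "cinner (x - y) z = cinner x z - cinner (y::'a::complex_hilbert) z"
  using cinner_add_left[of x "-y" z] by (simp add: cinner_minus_left)

lemma cinner_add_right: "cinner x (y + z) = cinner x y + cinner (x::'a::complex_hilbert) z"
  by (simp add: cinner_commute[of x] cinner_add_left)

lemma cinner_scaleC_right: "cinner x (scaleC c y) = cnj c * cinner (x::'a::complex_hilbert) y"
  by (simp add: cinner_commute[of x] cinner_scaleC_left)

lemma cinner_self_Re: "Re (cinner x x) = (norm (x::'a::complex_hilbert))\<^sup>2"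
proof -
  have "Re (cinner x x) \<ge> 0"
  proof (rule ccontr)
    assume "\<not> Re (cinner x x) \<ge> 0"
    then have "sqrt (Re (cinner x x)) < 0" by simp
    then show False using norm_cinner[of x] norm_ge_zero[of x] by linarith
  qed
  then show ?thesis using norm_cinner[of x] by simp
qed

lemma cinner_self: "cinner x x = complex_of_real ((norm (x::'a::complex_hilbert))\<^sup>2)"
proof -
  have "Im (cinner x x) = - Im (cinner x x)"
    using arg_cong[OF cinner_commute[of x x], of Im] by (simp only: cnj.sel)
  then show ?thesis using cinner_self_Re[of x] by (simp add: complex_eq_iff)
qed

lemma norm_scaleC: "norm (scaleC c x) = cmod c * norm (x::'a::complex_hilbert)"
proof -
  have "cinner (scaleC c x) (scaleC c x) = (c * cnj c) * cinner x x"
    by (simp add: cinner_scaleC_left cinner_scaleC_right mult.assoc)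
  also have "\<dots> = complex_of_real ((cmod c * norm x)\<^sup>2)"
    by (simp add: cinner_self complex_norm_square[symmetric] power_mult_distrib)
  finally have "(norm (scaleC c x))\<^sup>2 = (cmod c * norm x)\<^sup>2"
    using cinner_self_Re[of "scaleC c x"] by simp
  then show ?thesis by (simp add: power2_eq_iff_nonneg)
qed

lemma norm_add_square:
  "(norm (x + y))\<^sup>2 = (norm x)\<^sup>2 + (norm y)\<^sup>2 + 2 * Re (cinner x (y::'a::complex_hilbert))"
proof -
  have "cinner (x + y) (x + y) = cinner x x + cinner y y + cinner x y + cnj (cinner x y)"
    by (simp add: cinner_add_left cinner_add_right cinner_commute[of y x])
  then have "Re (cinner (x + y) (x + y)) = Re (cinner x x) + Re (cinner y y) + 2 * Re (cinner x y)"
    by simp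
  then show ?thesis by (simp add: cinner_self_Re)
qed

lemma norm_diff_scaleC_square:
  "(norm (y - scaleC c x))\<^sup>2 =
     (norm y)\<^sup>2 + (cmod c * norm x)\<^sup>2 - 2 * Re (cnj c * cinner y (x::'a::complex_hilbert))"
proof -
  have "y - scaleC c x = y + scaleC (- c) x" by (simp add: scaleC_minus_left)
  then have "(norm (y - scaleC c x))\<^sup>2 = (norm (y + scaleC (- c) x))\<^sup>2" by (simp only:)
  also have "\<dots> = (norm y)\<^sup>2 + (cmod c * norm x)\<^sup>2 - 2 * Re (cnj c * cinner y x)"
    by (simp add: norm_add_square norm_scaleC cinner_scaleC_right)
  finally show ?thesis .
qed

lemma Re_cinner_le_norm: "Re (cinner x y) \<le> norm x * norm (y::'a::complex_hilbert)"
proof -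
  have "(norm (x + y))\<^sup>2 \<le> (norm x + norm y)\<^sup>2"
    by (simp add: norm_triangle_ineq power_mono)
  then show ?thesis by (simp add: norm_add_square power2_sum)
qed

text \<open>Rotating \<open>y\<close> by the phase of \<open>\<langle>x, y\<rangle>\<close> makes the inner product real and nonnegative.\<close>

lemma cinner_Cauchy_Schwarz: "cmod (cinner x y) \<le> norm x * norm (y::'a::complex_hilbert)"
proof (cases "cinner x y = 0")
  case False
  define a where "a = cinner x y"
  define t where "t = a / complex_of_real (cmod a)"
  have "cinner x (scaleC t y) = cnj t * a" by (simp add: cinner_scaleC_right a_def)
  also have "\<dots> = (a * cnj a) / complex_of_real (cmod a)" by (simp add: t_def)
  also have "\<dots> = complex_of_real (cmod a)"
    using False a_def by (simp add: complex_norm_square[symmetric] power2_eq_square)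
  finally have "cmod (cinner x y) = Re (cinner x (scaleC t y))" by (simp add: a_def)
  also have "\<dots> \<le> norm x * norm y"
    using Re_cinner_le_norm[of x "scaleC t y"] False by (simp add: norm_scaleC t_def a_def norm_divide)
  finally show ?thesis .
qed simp

lemma bounded_linear_scaleC: "bounded_linear (\<lambda>x::'a::complex_hilbert. scaleC c x)"
proof (rule bounded_linear_intro[where K="cmod c"])
  show "scaleC c (x + y) = scaleC c x + scaleC c y" for x y by (rule scaleC_add_right)
  show "scaleC c (scaleR r x) = scaleR r (scaleC c x)" for r x
    by (simp add: scaleR_scaleC scaleC_scaleC mult.commute)
  show "norm (scaleC c x) \<le> norm x * cmod c" for x by (simp add: norm_scaleC mult.commute)
qed

lemma bounded_clinear_diff_scaleC:
  assumes "bounded_clinear A"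
  shows "bounded_clinear (\<lambda>x. A x - scaleC l x)"
  using assms
  by (auto simp: bounded_clinear_def scaleC_diff_right scaleC_commute
      intro: bounded_linear_sub bounded_linear_scaleC)

lemma bounded_below_if_bounded_below_on_sphere:
  fixes T :: "'a::real_normed_vector \<Rightarrow> 'b::real_normed_vector"
  assumes "linear T" and "\<And>v. norm v = 1 \<Longrightarrow> e \<le> norm (T v)"
  shows "e * norm x \<le> norm (T x)"
proof (cases "x = 0")
  case False
  have "e \<le> norm (T (scaleR (1 / norm x) x))" using False by (intro assms(2)) simp
  also have "\<dots> = norm (T x) / norm x" using False by (simp add: linear_cmul[OF assms(1)])
  finally show ?thesis using False by (simp add: field_simps)
qed simp

lemma injective_if_bounded_below:
  fixes T :: "'a::real_normed_vector \<Rightarrow> 'b::real_normed_vector"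
  assumes "linear T" and "e > 0" and "\<And>x. e * norm x \<le> norm (T x)"
  shows "inj T"
proof (rule injI)
  fix a b assume "T a = T b"
  then have "e * norm (a - b) \<le> 0"
    using assms(3)[of "a - b"] by (simp add: linear_diff[OF assms(1)])
  then show "a = b" using assms(2) by (simp add: mult_le_0_iff)
qed

text \<open>\<open>Lx + Kx = y\<close> is the fixed-point equation of the contraction \<open>x \<mapsto> L\<inverse>(y - Kx)\<close>.\<close>

lemma surj_add_small_perturbation:
  fixes L K :: "'a::banach \<Rightarrow> 'a"
  assumes "linear L" "surj L" and L_below: "\<And>x. c * norm x \<le> norm (L x)"
    and "linear K" and K_bound: "\<And>x. norm (K x) \<le> k * norm x" and "0 \<le> k" "k < c"
  shows "surj (\<lambda>x. L x + K x)"
proof (rule surjI)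
  interpret L: linear L by fact
  interpret K: linear K by fact
  fix y
  have "c > 0" using assms by linarith
  define R where "R = inv L"
  have LR: "L (R z) = z" for z using assms(2) by (simp add: R_def surj_f_inv_f)
  have "inj L" using injective_if_bounded_below[OF \<open>linear L\<close> \<open>c > 0\<close> L_below] .
  have R_diff: "R a - R b = R (a - b)" for a b
    by (rule injD[OF \<open>inj L\<close>]) (simp add: L.diff LR)
  have R_bound: "norm (R z) \<le> norm z / c" for z
    using L_below[of "R z"] \<open>c > 0\<close> by (simp add: LR field_simps mult.commute)
  define f where "f x = R (y - K x)" for x
  have "\<exists>!x. f x = x"
  proof (rule banach_fix_type[of "k / c"])
    show "0 \<le> k / c" "k / c < 1" using assms \<open>c > 0\<close> by simp_all
    show "\<forall>x z. dist (f x) (f z) \<le> k / c * dist x z"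
    proof (intro allI)
      fix x z
      have "dist (f x) (f z) = norm (R (K (z - x)))"
        by (simp add: f_def dist_norm R_diff K.diff algebra_simps)
      also have "\<dots> \<le> k * norm (z - x) / c"
        using R_bound[of "K (z - x)"] K_bound[of "z - x"] \<open>c > 0\<close>
        by (meson divide_right_mono less_imp_le order_trans)
      finally show "dist (f x) (f z) \<le> k / c * dist x z"
        by (simp add: dist_norm norm_minus_commute)
    qed
  qed
  then obtain x where "f x = x" by blast
  then have "L x + K x = y" using LR[of "y - K x"] by (simp add: f_def)
  then show "L (SOME x. L x + K x = y) + K (SOME x. L x + K x = y) = y"
    by (rule someI)
qed

lemma op_invertible_if_surj_bounded_below:
  fixes T :: "'a::complex_hilbert \<Rightarrow> 'a"
  assumes T: "bounded_clinear T" and "surj T"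
    and "e > 0" and T_below: "\<And>x. e * norm x \<le> norm (T x)"
  shows "op_invertible T"
proof -
  have T_bl: "bounded_linear T" and T_hom: "\<And>c x. T (scaleC c x) = scaleC c (T x)"
    using T by (auto simp: bounded_clinear_def)
  interpret T: bounded_linear T by fact
  define B where "B = inv T"
  have TB: "T (B z) = z" for z using assms(2) by (simp add: B_def surj_f_inv_f)
  have inj: "inj T"
    using injective_if_bounded_below[OF T.linear \<open>e > 0\<close> T_below] .
  have "bounded_linear B"
  proof (rule bounded_linear_intro[where K="1/e"])
    show "B (x + y) = B x + B y" for x y by (rule injD[OF inj]) (simp add: T.add TB)
    show "B (scaleR r x) = scaleR r (B x)" for r x by (rule injD[OF inj]) (simp add: T.scale TB)
    show "norm (B x) \<le> norm x * (1/e)" for x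
      using T_below[of "B x"] \<open>e > 0\<close> by (simp add: TB field_simps mult.commute)
  qed
  moreover have "B (scaleC c x) = scaleC c (B x)" for c x
    by (rule injD[OF inj]) (simp add: T_hom TB)
  ultimately have "bounded_clinear B" by (simp add: bounded_clinear_def)
  moreover have "B \<circ> T = id" using inj by (simp add: B_def)
  moreover have "T \<circ> B = id" using assms(2) by (simp add: B_def surj_iff)
  ultimately show ?thesis unfolding op_invertible_def by blast
qed

text \<open>A bounded inverse would bound \<open>1 = \<parallel>x\<^sub>n\<parallel>\<close> by a multiple of \<open>\<parallel>Ax\<^sub>n - \<lambda>x\<^sub>n\<parallel> \<rightarrow> 0\<close>.\<close>

lemma approx_eigenvalue_in_op_spectrum:
  fixes A :: "'a::complex_hilbert \<Rightarrow> 'a"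
  assumes unit: "\<And>n. norm (xs n) = 1"
    and lim: "(\<lambda>n. norm (A (xs n) - scaleC l (xs n))) \<longlonglongrightarrow> 0"
  shows "l \<in> op_spectrum A"
proof (rule ccontr)
  assume "l \<notin> op_spectrum A"
  then obtain B where B: "bounded_clinear B" "B \<circ> (\<lambda>x. A x - scaleC l x) = id"
    unfolding op_spectrum_def op_invertible_def by blast
  then obtain K where K: "\<And>x. norm (B x) \<le> norm x * K"
    unfolding bounded_clinear_def using bounded_linear.bounded by blast
  have "1 \<le> norm (A (xs n) - scaleC l (xs n)) * K" for n
    using K[of "A (xs n) - scaleC l (xs n)"] fun_cong[OF B(2), of "xs n"] unit[of n] by simp
  then have "1 \<le> (0::real) * K"
    using tendsto_lowerbound[OF tendsto_mult_right[OF lim, of K], of 1]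
    by (auto intro: always_eventually)
  then show False by simp
qed

lemma closure_num_rangeE:
  fixes A :: "'a::complex_hilbert \<Rightarrow> 'a"
  assumes "l \<in> closure (num_range A)"
  obtains xs where "\<And>n. norm (xs n) = 1" "(\<lambda>n. cinner (A (xs n)) (xs n)) \<longlonglongrightarrow> l"
proof -
  obtain f where f: "\<And>n. f n \<in> num_range A" "f \<longlonglongrightarrow> l"
    using assms unfolding closure_sequential by blast
  then have "\<forall>n. \<exists>x. norm x = 1 \<and> f n = cinner (A x) x" unfolding num_range_def by blast
  then obtain xs where xs: "\<And>n. norm (xs n) = 1 \<and> f n = cinner (A (xs n)) (xs n)"
    by metis
  then have "f = (\<lambda>n. cinner (A (xs n)) (xs n))" by auto
  with f(2) xs show ?thesis by (intro that[of xs]) simp_all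
qed

lemma max_num_range_subset_closure: "max_num_range A \<subseteq> closure (num_range A)"
proof
  fix l assume "l \<in> max_num_range A"
  then obtain xs where "\<And>n. norm (xs n) = 1" "(\<lambda>n. cinner (A (xs n)) (xs n)) \<longlonglongrightarrow> l"
    unfolding max_num_range_def by blast
  then show "l \<in> closure (num_range A)"
    unfolding closure_sequential num_range_def
    by (intro exI[of _ "\<lambda>n. cinner (A (xs n)) (xs n)"]) auto
qed

lemma norm_apply_tendsto_onorm:
  fixes A :: "'a::complex_hilbert \<Rightarrow> 'a"
  assumes "bounded_linear A" and unit: "\<And>n. norm (xs n) = 1"
    and lim: "(\<lambda>n. cinner (A (xs n)) (xs n)) \<longlonglongrightarrow> l" and "cmod l = onorm A"
  shows "(\<lambda>n. norm (A (xs n))) \<longlonglongrightarrow> onorm A"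
proof (rule real_tendsto_sandwich)
  show "\<forall>\<^sub>F n in sequentially. cmod (cinner (A (xs n)) (xs n)) \<le> norm (A (xs n))"
    using cinner_Cauchy_Schwarz[of "A (xs _)" "xs _"] unit by simp
  show "\<forall>\<^sub>F n in sequentially. norm (A (xs n)) \<le> onorm A"
    using onorm[OF assms(1), of "xs _"] unit by simp
  show "(\<lambda>n. cmod (cinner (A (xs n)) (xs n))) \<longlonglongrightarrow> onorm A"
    using tendsto_norm[OF lim] assms(4) by simp
qed simp

lemma closure_num_range_on_circle_in_max_num_range:
  fixes A :: "'a::complex_hilbert \<Rightarrow> 'a"
  assumes "bounded_linear A" "l \<in> closure (num_range A)" "cmod l = onorm A"
  shows "l \<in> max_num_range A"
proof -
  obtain xs where "\<And>n. norm (xs n) = 1" "(\<lambda>n. cinner (A (xs n)) (xs n)) \<longlonglongrightarrow> l"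
    using closure_num_rangeE[OF assms(2)] by blast
  with norm_apply_tendsto_onorm[OF assms(1)] assms(3) show ?thesis
    unfolding max_num_range_def by blast
qed

lemma closure_num_range_on_circle_in_op_spectrum:
  fixes A :: "'a::complex_hilbert \<Rightarrow> 'a"
  assumes "bounded_linear A" "l \<in> closure (num_range A)" "cmod l = onorm A"
  shows "l \<in> op_spectrum A"
proof -
  obtain xs where unit: "\<And>n. norm (xs n) = 1"
    and lim: "(\<lambda>n. cinner (A (xs n)) (xs n)) \<longlonglongrightarrow> l"
    using closure_num_rangeE[OF assms(2)] by blast
  define r where "r = onorm A"
  have "Re (cnj l * l) = r\<^sup>2"
    using assms(3) cmod_power2[of l] by (simp add: r_def power2_eq_square)
  then have "(\<lambda>n. Re (cnj l * cinner (A (xs n)) (xs n))) \<longlonglongrightarrow> r\<^sup>2"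
    using tendsto_Re[OF tendsto_mult[OF tendsto_const lim, of "cnj l"]] by simp
  then have "(\<lambda>n. (norm (A (xs n)))\<^sup>2 + r\<^sup>2 - 2 * Re (cnj l * cinner (A (xs n)) (xs n)))
          \<longlonglongrightarrow> r\<^sup>2 + r\<^sup>2 - 2 * r\<^sup>2"
    using norm_apply_tendsto_onorm[OF assms(1) unit lim assms(3)]
    by (intro tendsto_intros) (simp_all add: r_def)
  moreover have "(norm (A (xs n) - scaleC l (xs n)))\<^sup>2 =
      (norm (A (xs n)))\<^sup>2 + r\<^sup>2 - 2 * Re (cnj l * cinner (A (xs n)) (xs n))" for n
    using norm_diff_scaleC_square[of "A (xs n)" l "xs n"] unit[of n] assms(3) by (simp add: r_def)
  ultimately have "(\<lambda>n. (norm (A (xs n) - scaleC l (xs n)))\<^sup>2) \<longlonglongrightarrow> 0"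
    by simp
  then have "(\<lambda>n. sqrt ((norm (A (xs n) - scaleC l (xs n)))\<^sup>2)) \<longlonglongrightarrow> sqrt 0"
    by (intro tendsto_intros)
  then show ?thesis
    by (intro approx_eigenvalue_in_op_spectrum[OF unit]) simp
qed

lemma surj_diff_scaleC_if_onorm_less:
  fixes A :: "'a::complex_hilbert \<Rightarrow> 'a"
  assumes "bounded_linear A" and "onorm A < cmod m"
  shows "surj (\<lambda>x. A x - scaleC m x)"
proof -
  have "m \<noteq> 0" using assms onorm_pos_le[OF assms(1)] by auto
  have "surj (\<lambda>x. - scaleC m x + A x)"
  proof (rule surj_add_small_perturbation[where c="cmod m" and k="onorm A"])
    show "linear (\<lambda>x::'a. - scaleC m x)"
      by (intro linear_compose_neg bounded_linear.linear bounded_linear_scaleC)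
    show "surj (\<lambda>x::'a. - scaleC m x)"
    proof (rule surjI)
      show "- scaleC m (scaleC (- inverse m) y) = y" for y :: 'a
        using \<open>m \<noteq> 0\<close> by (simp add: scaleC_scaleC scaleC_minus_left scaleC_minus_right scaleC_one)
    qed
  qed (use assms onorm[OF assms(1)] onorm_pos_le[OF assms(1)] in
       \<open>simp_all add: norm_scaleC bounded_linear.linear mult.commute\<close>)
  then show ?thesis by (simp add: add.commute)
qed

lemma num_range_bounded_below:
  fixes A :: "'a::complex_hilbert \<Rightarrow> 'a"
  assumes "bounded_linear A" and "ball l e \<inter> num_range A = {}"
  shows "e * norm x \<le> norm (A x - scaleC l x)"
proof (rule bounded_below_if_bounded_below_on_sphere)
  show "linear (\<lambda>x. A x - scaleC l x)"
    by (intro linear_compose_sub bounded_linear.linear assms(1) bounded_linear_scaleC)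
  fix v :: 'a assume v: "norm v = 1"
  then have "cinner (A v) v \<notin> ball l e" using assms(2) unfolding num_range_def by blast
  then have "e \<le> cmod (cinner (A v) v - l)" by (simp add: dist_norm norm_minus_commute)
  also have "cinner (A v) v - l = cinner (A v - scaleC l v) v"
    using v by (simp add: cinner_diff_left cinner_scaleC_left cinner_self)
  also have "cmod \<dots> \<le> norm (A v - scaleC l v)"
    using cinner_Cauchy_Schwarz[of "A v - scaleC l v" v] v by simp
  finally show "e \<le> norm (A v - scaleC l v)" .
qed

lemma op_spectrum_outside_disc_in_closure_num_range:
  fixes A :: "'a::complex_hilbert \<Rightarrow> 'a"
  assumes A: "bounded_clinear A" and "l \<in> op_spectrum A" and "onorm A \<le> cmod l"
  shows "l \<in> closure (num_range A)"
proof (rule ccontr)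
  assume "l \<notin> closure (num_range A)"
  then obtain e where "e > 0" "ball l e \<subseteq> - closure (num_range A)"
    using open_contains_ball[of "- closure (num_range A)"] by blast
  then have disj: "ball l e \<inter> num_range A = {}" using closure_subset by blast
  have A_bl: "bounded_linear A" using A by (simp add: bounded_clinear_def)
  define u where "u = (if l = 0 then 1 else sgn l)"
  define m where "m = l + complex_of_real (e / 4) * u"
  have "l = complex_of_real (cmod l) * u"
    by (simp add: u_def complex_sgn_def scaleR_conv_of_real)
  then have m_eq: "m = complex_of_real (cmod l + e / 4) * u"
    by (simp add: m_def distrib_right)
  have "cmod u = 1" by (simp add: u_def norm_sgn)
  then have "cmod m = cmod l + e / 4"
    unfolding m_eq norm_mult norm_of_real using \<open>e > 0\<close> by simp
  then have surj_m: "surj (\<lambda>x. A x - scaleC m x)"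
    using surj_diff_scaleC_if_onorm_less[OF A_bl] assms(3) \<open>e > 0\<close> by simp
  have step: "scaleC m x = scaleC l x + scaleC (m - l) x" for x :: 'a
    using scaleC_add_left[of l "m - l" x] by simp
  have norm_step: "norm (scaleC (m - l) x) = e / 4 * norm x" for x :: 'a
    using \<open>cmod u = 1\<close> \<open>e > 0\<close> by (simp add: m_def norm_scaleC norm_mult)
  have "surj (\<lambda>x. (A x - scaleC m x) + scaleC (m - l) x)"
  proof (rule surj_add_small_perturbation[where c="e - e / 4" and k="e / 4"])
    show "(e - e / 4) * norm x \<le> norm (A x - scaleC m x)" for x
      using num_range_bounded_below[OF A_bl disj, of x] norm_step[of x]
        norm_triangle_ineq[of "A x - scaleC m x" "scaleC (m - l) x"]
      by (simp add: step algebra_simps)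
  qed (use surj_m norm_step \<open>e > 0\<close> A_bl in
       \<open>simp_all add: linear_compose_sub bounded_linear.linear bounded_linear_scaleC\<close>)
  then have "surj (\<lambda>x. A x - scaleC l x)" by (simp add: step algebra_simps)
  then have "op_invertible (\<lambda>x. A x - scaleC l x)"
    using op_invertible_if_surj_bounded_below[OF bounded_clinear_diff_scaleC[OF A] _ \<open>e > 0\<close>]
      num_range_bounded_below[OF A_bl disj] by blast
  then show False using assms(2) unfolding op_spectrum_def by simp
qed

theorem lemma1:
  fixes A :: "'a::complex_hilbert \<Rightarrow> 'a"
  assumes "\<exists>x::'a. x \<noteq> 0"
    and "bounded_clinear A"
  shows "max_num_range A \<inter> {z. cmod z = onorm A} = closure (num_range A) \<inter> {z. cmod z = onorm A}
       \<and> closure (num_range A) \<inter> {z. cmod z = onorm A} = op_spectrum A \<inter> {z. cmod z = onorm A}"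
proof -
  have A: "bounded_linear A" using assms(2) by (simp add: bounded_clinear_def)
  show ?thesis
    using max_num_range_subset_closure[of A]
      closure_num_range_on_circle_in_max_num_range[OF A]
      closure_num_range_on_circle_in_op_spectrum[OF A]
      op_spectrum_outside_disc_in_closure_num_range[OF assms(2)]
    by fastforce
qed

end
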